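(* Consider the binary-symmetric parallel-relay (BSPR) network with $K\ge 1$ relays. Its capacity satisfies $C \leq R_\textnormal{ub}$, where \[ R_\textnormal{ub} = \min \left\{ \max_{p(u)} I(U;\bar{V}),\; K - \sum_{i=1}^K H(p_{i,d}) \right\}, \] where $\bar V=(V_1,\dots,V_K)$ with $V_i=U\oplus Z_i$ (single-letter), the $Z_i$ independent of each other and of $U$, $Z_i\sim\mathrm{Bernoulli}(p_{s,i})$, and the maximum is over distributions of $U\in\{0,1\}$.
   Context: BSPR network with $K$ relays: a source, relays $1,\dots,K$, and a destination. At each network use $t$, the source sends $U[t]\in\{0,1\}$; relay $i$ receives $V_i[t]=U[t]\oplus Z_i[t]$ with $\Pr\{Z_i=1\}=p_{s,i}$, $0\le p_{s,i}\le 1/2$; relay $i$ sends $X_i[t]\in\{0,1\}$ and the destination receives $Y_i[t]=X_i[t]\oplus E_i[t]$ with $\Pr\{E_i=1\}=p_{i,d}$, $0\le p_{i,d}\le 1/2$ ($\oplus$ is addition mod 2). All $Z_i,E_i$ are mutually independent and i.i.d. over network uses. An $(M,n)$ code consists of a message $W$ uniform on $\{0,\dots,M-1\}$, a source encoder $(U[1],\dots,U[n])=f_S(W)$, relay encoders $X_i[t]=f_{i,t}(V_i[1],\dots,V_i[t-1])$ for $t=1,\dots,n$, and a decoder $\hat W=g(\boldsymbol Y_1,\dots,\boldsymbol Y_K)$ where $\boldsymbol Y_i=(Y_i[1],\dots,Y_i[n])$. Its rate is $(\log_2 M)/n$ and its average error probability is $P_e=\frac1M\sum_w\Pr\{\hat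 W\ne w\mid W=w\}$. A rate $R$ is achievable if for every $\epsilon>0$ there exists, for all sufficiently large $n$, a $(2^{nR},n)$ code with $P_e\le\epsilon$; the capacity $C$ is the supremum of achievable rates. $H(p)=-p\log_2 p-(1-p)\log_2(1-p)$ with $H(0)=0$. *)

theory Defs
  imports Complex_Main
begin

text \<open>BSPR network with K relays, indexed 0..K-1; network uses indexed 0..n-1.
  Bits are booleans, exclusive-or is inequality on bool.\<close>

definition binary_entropy :: "real \<Rightarrow> real" where
  "binary_entropy p = (if p = 0 \<or> p = 1 then 0
      else - p * log 2 p - (1 - p) * log 2 (1 - p))"

text \<open>Noise realisations (Z or E) over K links and n uses; zero outside the range.\<close>
definition noise_set :: "nat \<Rightarrow> nat \<Rightarrow> (nat \<Rightarrow> nat \<Rightarrow> bool) set" where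
  "noise_set K n = {z. \<forall>i t. z i t \<longrightarrow> i < K \<and> t < n}"

definition noise_prob :: "(nat \<Rightarrow> real) \<Rightarrow> nat \<Rightarrow> nat \<Rightarrow> (nat \<Rightarrow> nat \<Rightarrow> bool) \<Rightarrow> real" where
  "noise_prob p K n z = (\<Prod>i<K. \<Prod>t<n. if z i t then p i else 1 - p i)"

text \<open>Received sequence of relay i: V_i[t] = U[t] xor Z_i[t].\<close>
definition relay_in :: "nat \<Rightarrow> (nat \<Rightarrow> nat \<Rightarrow> bool) \<Rightarrow> nat \<Rightarrow> (nat \<Rightarrow> nat \<Rightarrow> bool) \<Rightarrow> nat \<Rightarrow> nat \<Rightarrow> bool" where
  "relay_in n fS w z i = (\<lambda>t. if t < n then fS w t \<noteq> z i t else False)"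

text \<open>Sequences received by the destination: Y_i[t] = X_i[t] xor E_i[t],
  with X_i[t] = fR i t V_i.\<close>
definition dest_out ::
  "nat \<Rightarrow> nat \<Rightarrow> (nat \<Rightarrow> nat \<Rightarrow> bool) \<Rightarrow> (nat \<Rightarrow> nat \<Rightarrow> (nat \<Rightarrow> bool) \<Rightarrow> bool)
     \<Rightarrow> nat \<Rightarrow> (nat \<Rightarrow> nat \<Rightarrow> bool) \<Rightarrow> (nat \<Rightarrow> nat \<Rightarrow> bool) \<Rightarrow> nat \<Rightarrow> nat \<Rightarrow> bool" where
  "dest_out K n fS fR w z e =
     (\<lambda>i t. if i < K \<and> t < n then fR i t (relay_in n fS w z i) \<noteq> e i t else False)"

definition causal_relays :: "(nat \<Rightarrow> nat \<Rightarrow> (nat \<Rightarrow> bool) \<Rightarrow> bool) \<Rightarrow> bool" where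
  "causal_relays fR = (\<forall>i t v v'. (\<forall>s<t. v s = v' s) \<longrightarrow> fR i t v = fR i t v')"

definition error_prob ::
  "nat \<Rightarrow> (nat \<Rightarrow> real) \<Rightarrow> (nat \<Rightarrow> real) \<Rightarrow> nat \<Rightarrow> nat \<Rightarrow> (nat \<Rightarrow> nat \<Rightarrow> bool)
     \<Rightarrow> (nat \<Rightarrow> nat \<Rightarrow> (nat \<Rightarrow> bool) \<Rightarrow> bool) \<Rightarrow> ((nat \<Rightarrow> nat \<Rightarrow> bool) \<Rightarrow> nat) \<Rightarrow> real" where
  "error_prob K ps pd n M fS fR g =
     (1 / real M) * (\<Sum>w<M. \<Sum>z\<in>noise_set K n. \<Sum>e\<in>noise_set K n.
        noise_prob ps K n z * noise_prob pd K n e *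
        (if g (dest_out K n fS fR w z e) \<noteq> w then 1 else 0))"

definition achievable :: "nat \<Rightarrow> (nat \<Rightarrow> real) \<Rightarrow> (nat \<Rightarrow> real) \<Rightarrow> real \<Rightarrow> bool" where
  "achievable K ps pd R =
     (\<forall>\<epsilon>>0. \<exists>N. \<forall>n\<ge>N. \<exists>fS fR g. causal_relays fR \<and>
        error_prob K ps pd n (nat \<lceil>2 powr (real n * R)\<rceil>) fS fR g \<le> \<epsilon>)"

definition capacity :: "nat \<Rightarrow> (nat \<Rightarrow> real) \<Rightarrow> (nat \<Rightarrow> real) \<Rightarrow> real" where
  "capacity K ps pd = Sup {R. achievable K ps pd R}"

text \<open>Single-letter mutual information I(U; V_1..V_K) with Pr{U=1} = q.\<close>
definition out_set :: "nat \<Rightarrow> (nat \<Rightarrow> bool) set" where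
  "out_set K = {v. \<forall>i. v i \<longrightarrow> i < K}"

definition in_prob :: "real \<Rightarrow> bool \<Rightarrow> real" where
  "in_prob q u = (if u then q else 1 - q)"

definition cond_prob :: "(nat \<Rightarrow> real) \<Rightarrow> nat \<Rightarrow> bool \<Rightarrow> (nat \<Rightarrow> bool) \<Rightarrow> real" where
  "cond_prob ps K u v = (\<Prod>i<K. if v i \<noteq> u then ps i else 1 - ps i)"

definition mutual_info :: "(nat \<Rightarrow> real) \<Rightarrow> nat \<Rightarrow> real \<Rightarrow> real" where
  "mutual_info ps K q =
     (\<Sum>u\<in>(UNIV :: bool set). \<Sum>v\<in>out_set K.
        (let a = in_prob q u * cond_prob ps K u v;
             pv = (\<Sum>u'\<in>(UNIV :: bool set). in_prob q u' * cond_prob ps K u' v)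
         in if a = 0 then 0 else a * log 2 (cond_prob ps K u v / pv)))"

definition R_ub :: "nat \<Rightarrow> (nat \<Rightarrow> real) \<Rightarrow> (nat \<Rightarrow> real) \<Rightarrow> real" where
  "R_ub K ps pd = min (SUP q\<in>{0..1}. mutual_info ps K q)
                      (real K - (\<Sum>i<K. binary_entropy (pd i)))"

end

theory Submission imports Defs "HOL-Library.FuncSet" begin

text \<open>Both terms of the minimum come from strong converses for the two cuts of the network,
  proved by one change-of-measure inequality: \<open>a \<phi> \<le> a (a / (\<tau> b)) powr s + \<tau> b \<phi>\<close> for
  \<open>0 \<le> \<phi> \<le> 1\<close>, \<open>\<tau> > 0\<close>, \<open>s \<ge> 0\<close>. Take for \<open>a\<close> the law of the observations behind the cut given
  the message, for \<open>b\<close> a reference law not depending on the message, and for \<open>\<phi>\<close> the probability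
  of decoding the message from them. Summing over observations and messages bounds the
  success mass of an \<open>M\<close>-message code of length \<open>n\<close> by \<open>M \<tau> powr (-s) Y ^ n + \<tau>\<close>, where \<open>Y\<close> is
  the single-letter tilted sum \<open>\<Sum> a powr (1 + s) b powr (-s)\<close>.

  Behind the first cut the observations are the relay inputs and \<open>b\<close> is their law under a
  uniform input bit; flipping all bits shows that \<open>Y\<close> does not depend on the codeword.
  Behind the second cut the observations are the link noises and \<open>b\<close> is uniform; the decoder
  sees the noise through a bijection, so the \<open>b\<close>-mass of all decoding regions is at most one.
  In both cases \<open>exp x \<le> 1 + x + x\<^sup>2\<close> gives \<open>Y \<le> exp (s ln 2 I + s\<^sup>2 C)\<close> for the cut value \<open>I\<close>.
  With \<open>\<tau> = 2 powr (n (I + \<eta>))\<close> and \<open>s\<close> small the success probability at rate \<open>I + 2 \<eta>\<close>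
  decays exponentially.\<close>

section \<open>Sums over finite sets of bit arrays\<close>

lemma sum_prod_box_eq_prod_sum:
  assumes "finite A" "finite S"
  shows "(\<Sum>f\<in>{f. (\<forall>x. x\<notin>A \<longrightarrow> f x = d) \<and> (\<forall>x\<in>A. f x \<in> S)}. \<Prod>x\<in>A. h x (f x))
         = (\<Prod>x\<in>A. \<Sum>y\<in>S. (h x y :: real))"
proof -
  have "(\<Sum>f\<in>{f. (\<forall>x. x\<notin>A \<longrightarrow> f x = d) \<and> (\<forall>x\<in>A. f x \<in> S)}. \<Prod>x\<in>A. h x (f x))
        = (\<Sum>g\<in>PiE A (\<lambda>_. S). \<Prod>x\<in>A. h x (g x))"
    by (rule sum.reindex_bij_witness[of _ "\<lambda>g x. if x\<in>A then g x else d" "\<lambda>f. restrict f A"])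
       (auto simp: PiE_def extensional_def fun_eq_iff intro!: prod.cong)
  also have "\<dots> = (\<Prod>x\<in>A. \<Sum>y\<in>S. h x y)"
    using assms by (simp add: prod_sum_PiE)
  finally show ?thesis .
qed

lemma finite_out_set: "finite (out_set K)"
proof (rule finite_subset)
  show "out_set K \<subseteq> (\<lambda>B x. x \<in> B) ` Pow {..<K}"
    by (auto simp: out_set_def image_iff intro!: bexI[of _ "Collect _"])
qed auto

lemma out_set_eq_box:
  "out_set K = {f. (\<forall>x. x\<notin>{..<K} \<longrightarrow> f x = False) \<and> (\<forall>x\<in>{..<K}. f x \<in> UNIV)}"
  by (auto simp: out_set_def)

lemma noise_set_eq_box:
  "noise_set K n = {f. (\<forall>x. x\<notin>{..<K} \<longrightarrow> f x = (\<lambda>_. False)) \<and> (\<forall>x\<in>{..<K}. f x \<in> out_set n)}"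
  by (auto simp: noise_set_def out_set_def fun_eq_iff)

lemma sum_out_set_prod:
  "(\<Sum>v\<in>out_set K. \<Prod>i<K. h i (v i)) = (\<Prod>i<K. h i True + (h i False :: real))"
  unfolding out_set_eq_box by (subst sum_prod_box_eq_prod_sum) (auto simp: UNIV_bool add.commute)

lemma sum_noise_set_prod:
  "(\<Sum>z\<in>noise_set K n. \<Prod>i<K. \<Prod>t<n. h i t (z i t))
     = (\<Prod>i<K. \<Prod>t<n. h i t True + (h i t False :: real))"
proof -
  have "(\<Sum>z\<in>noise_set K n. \<Prod>i<K. \<Prod>t<n. h i t (z i t))
        = (\<Prod>i<K. \<Sum>v\<in>out_set n. \<Prod>t<n. h i t (v t))"
    unfolding noise_set_eq_box by (subst sum_prod_box_eq_prod_sum) (auto simp: finite_out_set)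
  then show ?thesis by (simp add: sum_out_set_prod)
qed

lemma sum_noise_set_prod_columns:
  "(\<Sum>v\<in>noise_set K n. \<Prod>t<n. h t (\<lambda>i. v i t)) = (\<Prod>t<n. \<Sum>y\<in>out_set K. (h t y :: real))"
proof -
  have "(\<Sum>v\<in>noise_set K n. \<Prod>t<n. h t (\<lambda>i. v i t)) = (\<Sum>v\<in>noise_set n K. \<Prod>t<n. h t (v t))"
    by (rule sum.reindex_bij_witness[of _ "\<lambda>v i t. v t i" "\<lambda>v t i. v i t"])
       (auto simp: noise_set_def)
  also have "\<dots> = (\<Prod>t<n. \<Sum>y\<in>out_set K. h t y)"
    unfolding noise_set_eq_box by (subst sum_prod_box_eq_prod_sum) (auto simp: finite_out_set)
  finally show ?thesis .
qed

lemma card_noise_set: "real (card (noise_set K n)) = 2 ^ (K * n)"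
  using sum_noise_set_prod[where h = "\<lambda>i t b. 1" and K = K and n = n]
  by (simp add: power_mult[symmetric] mult.commute)

section \<open>Probabilities of the network\<close>

lemma noise_prob_nonneg: "\<forall>i<K. 0 \<le> p i \<and> p i \<le> 1 \<Longrightarrow> 0 \<le> noise_prob p K n z"
  unfolding noise_prob_def by (intro prod_nonneg) auto

lemma sum_noise_prob: "(\<Sum>z\<in>noise_set K n. noise_prob p K n z) = 1"
  unfolding noise_prob_def
  using sum_noise_set_prod[where h = "\<lambda>i t b. if b then p i else 1 - p i" and K = K and n = n]
  by simp

lemma cond_prob_nonneg: "\<forall>i<K. 0 \<le> ps i \<and> ps i \<le> 1 \<Longrightarrow> 0 \<le> cond_prob ps K u y"
  unfolding cond_prob_def by (intro prod_nonneg) auto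

lemma sum_cond_prob: "(\<Sum>y\<in>out_set K. cond_prob ps K u y) = 1"
  unfolding cond_prob_def
  using sum_out_set_prod[where h = "\<lambda>i b. if b \<noteq> u then ps i else 1 - ps i" and K = K]
  by (cases u) simp_all

definition relay_in_prob ::
  "nat \<Rightarrow> (nat \<Rightarrow> real) \<Rightarrow> nat \<Rightarrow> (nat \<Rightarrow> nat \<Rightarrow> bool) \<Rightarrow> nat \<Rightarrow> (nat \<Rightarrow> nat \<Rightarrow> bool) \<Rightarrow> real" where
  "relay_in_prob K ps n fS w v = (\<Prod>t<n. cond_prob ps K (fS w t) (\<lambda>i. v i t))"

definition link_out ::
  "nat \<Rightarrow> nat \<Rightarrow> (nat \<Rightarrow> nat \<Rightarrow> (nat \<Rightarrow> bool) \<Rightarrow> bool) \<Rightarrow> (nat \<Rightarrow> nat \<Rightarrow> bool)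
     \<Rightarrow> (nat \<Rightarrow> nat \<Rightarrow> bool) \<Rightarrow> nat \<Rightarrow> nat \<Rightarrow> bool" where
  "link_out K n fR v e = (\<lambda>i t. if i < K \<and> t < n then fR i t (v i) \<noteq> e i t else False)"

definition decode_prob ::
  "nat \<Rightarrow> (nat \<Rightarrow> real) \<Rightarrow> nat \<Rightarrow> (nat \<Rightarrow> nat \<Rightarrow> (nat \<Rightarrow> bool) \<Rightarrow> bool)
     \<Rightarrow> ((nat \<Rightarrow> nat \<Rightarrow> bool) \<Rightarrow> nat) \<Rightarrow> nat \<Rightarrow> (nat \<Rightarrow> nat \<Rightarrow> bool) \<Rightarrow> real" where
  "decode_prob K pd n fR g w v = (\<Sum>e\<in>noise_set K n.
     noise_prob pd K n e * (if g (link_out K n fR v e) = w then 1 else 0))"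

definition success ::
  "nat \<Rightarrow> (nat \<Rightarrow> real) \<Rightarrow> (nat \<Rightarrow> real) \<Rightarrow> nat \<Rightarrow> nat \<Rightarrow> (nat \<Rightarrow> nat \<Rightarrow> bool)
     \<Rightarrow> (nat \<Rightarrow> nat \<Rightarrow> (nat \<Rightarrow> bool) \<Rightarrow> bool) \<Rightarrow> ((nat \<Rightarrow> nat \<Rightarrow> bool) \<Rightarrow> nat) \<Rightarrow> real" where
  "success K ps pd n M fS fR g = (\<Sum>w<M. \<Sum>z\<in>noise_set K n. \<Sum>e\<in>noise_set K n.
     noise_prob ps K n z * noise_prob pd K n e *
     (if g (dest_out K n fS fR w z e) = w then 1 else 0))"

lemma error_prob_eq_success:
  assumes "M > 0"
  shows "error_prob K ps pd n M fS fR g = 1 - success K ps pd n M fS fR g / M"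
proof -
  let ?N = "noise_set K n"
  have "error_prob K ps pd n M fS fR g = (1 / real M) * (\<Sum>w<M. \<Sum>z\<in>?N. \<Sum>e\<in>?N.
        noise_prob ps K n z * noise_prob pd K n e - noise_prob ps K n z * noise_prob pd K n e *
        (if g (dest_out K n fS fR w z e) = w then 1 else 0))"
    unfolding error_prob_def by (intro arg_cong[where f = "\<lambda>x. _ * x"] sum.cong) auto
  also have "\<dots> = (1 / real M) * (real M - success K ps pd n M fS fR g)"
    unfolding success_def
    by (simp add: sum_subtractf sum_distrib_left[symmetric] sum_noise_prob)
  finally show ?thesis using assms by (simp add: field_simps)
qed

lemma relay_in_prob_nonneg:
  "\<forall>i<K. 0 \<le> ps i \<and> ps i \<le> 1 \<Longrightarrow> 0 \<le> relay_in_prob K ps n fS w v"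
  unfolding relay_in_prob_def by (intro prod_nonneg cond_prob_nonneg)

lemma sum_relay_in_prob: "(\<Sum>v\<in>noise_set K n. relay_in_prob K ps n fS w v) = 1"
  unfolding relay_in_prob_def
  using sum_noise_set_prod_columns[where h = "\<lambda>t. cond_prob ps K (fS w t)" and K = K and n = n]
  by (simp add: sum_cond_prob)

lemma decode_prob_nonneg:
  "\<forall>i<K. 0 \<le> pd i \<and> pd i \<le> 1 \<Longrightarrow> 0 \<le> decode_prob K pd n fR g w v"
  unfolding decode_prob_def by (intro sum_nonneg mult_nonneg_nonneg noise_prob_nonneg) auto

lemma decode_prob_le_1:
  assumes "\<forall>i<K. 0 \<le> pd i \<and> pd i \<le> 1"
  shows "decode_prob K pd n fR g w v \<le> 1"
proof -
  have "decode_prob K pd n fR g w v \<le> (\<Sum>e\<in>noise_set K n. noise_prob pd K n e * 1)"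
    unfolding decode_prob_def by (intro sum_mono mult_left_mono noise_prob_nonneg assms) auto
  then show ?thesis by (simp add: sum_noise_prob)
qed

lemma sum_decode_prob_le_1:
  assumes "\<forall>i<K. 0 \<le> pd i \<and> pd i \<le> 1"
  shows "(\<Sum>w<M. decode_prob K pd n fR g w v) \<le> 1"
proof -
  have "(\<Sum>w<M. decode_prob K pd n fR g w v) = (\<Sum>e\<in>noise_set K n.
      noise_prob pd K n e * (\<Sum>w<M. if g (link_out K n fR v e) = w then 1 else 0))"
    unfolding decode_prob_def sum_distrib_left by (rule sum.swap)
  also have "\<dots> \<le> (\<Sum>e\<in>noise_set K n. noise_prob pd K n e * 1)"
    by (intro sum_mono mult_left_mono noise_prob_nonneg assms) (auto simp: sum.If_cases)
  finally show ?thesis by (simp add: sum_noise_prob)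
qed

lemma success_eq_sum_relay_in:
  "success K ps pd n M fS fR g
     = (\<Sum>w<M. \<Sum>v\<in>noise_set K n. relay_in_prob K ps n fS w v * decode_prob K pd n fR g w v)"
proof -
  define V where "V w z = (\<lambda>i t. i < K \<and> relay_in n fS w z i t)" for w z
  have "success K ps pd n M fS fR g
        = (\<Sum>w<M. \<Sum>z\<in>noise_set K n. noise_prob ps K n z * decode_prob K pd n fR g w (V w z))"
    unfolding success_def decode_prob_def
    by (simp add: sum_distrib_left mult.assoc dest_out_def link_out_def V_def)
  also have "\<dots> = (\<Sum>w<M. \<Sum>v\<in>noise_set K n. relay_in_prob K ps n fS w v * decode_prob K pd n fR g w v)"
  proof (rule sum.cong[OF refl])
    fix w
    have "relay_in_prob K ps n fS w (V w z) = noise_prob ps K n z" if "z \<in> noise_set K n" for z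
      using that unfolding relay_in_prob_def V_def noise_prob_def cond_prob_def relay_in_def
      by (subst prod.swap) (intro prod.cong refl, auto simp: noise_set_def)
    then show "(\<Sum>z\<in>noise_set K n. noise_prob ps K n z * decode_prob K pd n fR g w (V w z))
        = (\<Sum>v\<in>noise_set K n. relay_in_prob K ps n fS w v * decode_prob K pd n fR g w v)"
      by (intro sum.reindex_bij_witness[of _ "\<lambda>v i t. i < K \<and> t < n \<and> v i t \<noteq> fS w t" "V w"])
         (auto simp: noise_set_def V_def relay_in_def fun_eq_iff)
  qed
  finally show ?thesis .
qed

lemma exp_le_one_plus_x_plus_square:
  assumes "x \<le> 1"
  shows "exp x \<le> 1 + x + (x::real)\<^sup>2"
proof (cases "x \<ge> 0")
  case True
  then show ?thesis using exp_bound assms by auto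
next
  case False
  define y where "y = -x"
  have y: "y > 0" using False y_def by auto
  have "exp x = 1 / exp y" by (simp add: y_def exp_minus field_simps)
  also have "\<dots> \<le> 1 / (1 + y)" using y by (intro divide_left_mono) (auto simp: add_pos_pos)
  also have "\<dots> \<le> 1 - y + y\<^sup>2"
  proof -
    have "1 \<le> (1 - y + y\<^sup>2) * (1 + y)"
      using y by (simp add: algebra_simps power2_eq_square power3_eq_cube)
    then show ?thesis using y by (simp add: divide_le_eq)
  qed
  finally show ?thesis by (simp add: y_def)
qed

lemma sum_mult_powr_le_quadratic:
  fixes P r :: "'b \<Rightarrow> real" and s :: real
  assumes "\<And>y. y \<in> S \<Longrightarrow> P y \<ge> 0"
    and "\<And>y. y \<in> S \<Longrightarrow> P y > 0 \<Longrightarrow> r y > 0 \<and> s * ln (r y) \<le> 1"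
  shows "(\<Sum>y\<in>S. P y * r y powr s)
    \<le> (\<Sum>y\<in>S. P y) + s * (\<Sum>y\<in>S. P y * ln (r y)) + s\<^sup>2 * (\<Sum>y\<in>S. P y * (ln (r y))\<^sup>2)"
proof -
  have "(\<Sum>y\<in>S. P y * r y powr s)
        \<le> (\<Sum>y\<in>S. P y + s * (P y * ln (r y)) + s\<^sup>2 * (P y * (ln (r y))\<^sup>2))"
  proof (intro sum_mono)
    fix y assume y: "y \<in> S"
    show "P y * r y powr s \<le> P y + s * (P y * ln (r y)) + s\<^sup>2 * (P y * (ln (r y))\<^sup>2)"
    proof (cases "P y > 0")
      case True
      with assms(2)[OF y] have r: "r y > 0" "s * ln (r y) \<le> 1" by auto
      have "r y powr s = exp (s * ln (r y))" using r by (simp add: powr_def mult.commute)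
      also have "\<dots> \<le> 1 + s * ln (r y) + (s * ln (r y))\<^sup>2"
        using r by (intro exp_le_one_plus_x_plus_square)
      finally have "P y * r y powr s \<le> P y * (1 + s * ln (r y) + (s * ln (r y))\<^sup>2)"
        using True by (intro mult_left_mono) auto
      then show ?thesis by (simp add: algebra_simps power2_eq_square)
    next
      case False
      then show ?thesis using assms(1)[OF y] by simp
    qed
  qed
  then show ?thesis by (simp add: sum.distrib sum_distrib_left)
qed

text \<open>Where \<open>a > \<tau> b\<close> the tilt \<open>(a / (\<tau> b)) powr s\<close> is at least \<open>1\<close>.\<close>

lemma mult_le_tilted_plus:
  fixes a b \<phi> \<tau> s :: real
  assumes "a \<ge> 0" "b \<ge> 0" "a > 0 \<Longrightarrow> b > 0" "0 \<le> \<phi>" "\<phi> \<le> 1" "\<tau> > 0" "s \<ge> 0"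
  shows "a * \<phi> \<le> a * (a / (\<tau> * b)) powr s + \<tau> * b * \<phi>"
proof (cases "a \<le> \<tau> * b")
  case True
  then have "a * \<phi> \<le> \<tau> * b * \<phi>" using assms by (intro mult_right_mono) auto
  then show ?thesis using assms by (smt (verit) mult_nonneg_nonneg powr_ge_zero)
next
  case False
  then have "a > 0" using assms by (smt (verit) mult_nonneg_nonneg)
  then have "b > 0" using assms by auto
  have "1 \<le> a / (\<tau> * b)" using False \<open>b > 0\<close> assms by (simp add: le_divide_eq)
  then have "1 \<le> (a / (\<tau> * b)) powr s" using assms by (intro ge_one_powr_ge_zero) auto
  then have "a * \<phi> \<le> a * (a / (\<tau> * b)) powr s"
    using assms \<open>a > 0\<close> by (smt (verit) mult_left_mono mult_right_le_one_le)
  then show ?thesis using assms by (smt (verit) mult_nonneg_nonneg)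
qed

section \<open>From a tilted success bound to non-achievability\<close>

lemma not_achievable_if_error_ge:
  assumes "0 \<le> a" "a < 1" "0 \<le> b" "b < 1"
    and "\<And>n fS fR g. error_prob K ps pd n (nat \<lceil>2 powr (real n * R)\<rceil>) fS fR g \<ge> 1 - a ^ n - b ^ n"
  shows "\<not> achievable K ps pd R"
proof
  assume "achievable K ps pd R"
  then obtain N where N: "\<forall>n\<ge>N. \<exists>fS fR g. causal_relays fR \<and>
        error_prob K ps pd n (nat \<lceil>2 powr (real n * R)\<rceil>) fS fR g \<le> 1/4"
    unfolding achievable_def by (meson divide_pos_pos zero_less_numeral zero_less_one)
  have "(\<lambda>n. a ^ n) \<longlonglongrightarrow> 0" "(\<lambda>n. b ^ n) \<longlonglongrightarrow> 0"
    using assms by (auto intro!: LIMSEQ_power_zero)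
  then have "eventually (\<lambda>n. a ^ n < 1/4 \<and> b ^ n < 1/4) sequentially"
    by (intro eventually_conj order_tendstoD(2)) auto
  then obtain N' where N': "\<And>n. n \<ge> N' \<Longrightarrow> a ^ n < 1/4 \<and> b ^ n < 1/4"
    by (auto simp: eventually_sequentially)
  obtain fS fR g where "error_prob K ps pd (max N N') (nat \<lceil>2 powr (real (max N N') * R)\<rceil>) fS fR g \<le> 1/4"
    using N by (meson max.cobounded1)
  moreover note assms(5)[of "max N N'" fS fR g] N'[of "max N N'"]
  ultimately show False by linarith
qed

lemma exists_small_tilt:
  fixes \<eta> C :: real
  assumes "\<eta> > 0" "C \<ge> 0"
  obtains s where "s > 0" "s \<le> 1" "s * C - \<eta> * ln 2 < 0"
proof
  define s where "s = min 1 (\<eta> * ln 2 / (2 * (C + 1)))"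
  have e: "\<eta> * ln 2 > 0" using assms by simp
  then show "s > 0" "s \<le> 1" using assms by (simp_all add: s_def)
  have "s * C \<le> \<eta> * ln 2 / (2 * (C + 1)) * C"
    using assms by (intro mult_right_mono) (auto simp: s_def)
  also have "\<dots> = \<eta> * ln 2 * (C / (2 * (C + 1)))" by simp
  also have "\<dots> < \<eta> * ln 2 * 1" using e assms by (intro mult_strict_left_mono) (auto simp: field_simps)
  finally show "s * C - \<eta> * ln 2 < 0" by simp
qed

lemma tilted_bound_decay:
  fixes I \<eta> s C S :: real and M n :: nat
  assumes "s > 0" and M: "real M \<ge> 2 powr (real n * (I + 2 * \<eta>))"
    and S: "S \<le> real M * exp (real n * (I + \<eta>) * ln 2) powr (-s)
                  * exp (real n * (s * ln 2 * I + s\<^sup>2 * C)) + exp (real n * (I + \<eta>) * ln 2)"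
  shows "S / real M \<le> exp (s * (s * C - \<eta> * ln 2)) ^ n + exp (- \<eta> * ln 2) ^ n"
proof -
  define \<tau> where "\<tau> = exp (real n * (I + \<eta>) * ln 2)"
  have M_pos: "real M > 0" using M by (smt (verit) powr_gt_zero)
  have "S / real M \<le> \<tau> powr (-s) * exp (real n * (s * ln 2 * I + s\<^sup>2 * C)) + \<tau> / real M"
    using S M_pos by (simp add: \<tau>_def field_simps)
  also have "\<tau> powr (-s) * exp (real n * (s * ln 2 * I + s\<^sup>2 * C)) = exp (s * (s * C - \<eta> * ln 2)) ^ n"
    by (simp add: \<tau>_def powr_def exp_add[symmetric] exp_of_nat_mult[symmetric] algebra_simps
        power2_eq_square)
  also have "\<tau> / real M \<le> \<tau> / 2 powr (real n * (I + 2 * \<eta>))"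
    using M M_pos by (intro divide_left_mono) (auto simp: \<tau>_def)
  also have "\<dots> = exp (- \<eta> * ln 2) ^ n"
    by (simp add: \<tau>_def powr_def exp_diff[symmetric] exp_of_nat_mult[symmetric] algebra_simps)
  finally show ?thesis by simp
qed

lemma not_achievable_if_success_le:
  fixes I C R :: real and Y :: "real \<Rightarrow> real"
  assumes "0 \<le> C" "I < R"
    and Y: "\<And>s. 0 < s \<Longrightarrow> s \<le> 1 \<Longrightarrow> 0 \<le> Y s \<and> Y s \<le> exp (s * ln 2 * I + s\<^sup>2 * C)"
    and success_le: "\<And>s n M fS fR g \<tau>. 0 < s \<Longrightarrow> s \<le> 1 \<Longrightarrow> 0 < \<tau> \<Longrightarrow>
      success K ps pd n M fS fR g \<le> real M * \<tau> powr (-s) * Y s ^ n + \<tau>"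
  shows "\<not> achievable K ps pd R"
proof -
  define \<eta> where "\<eta> = (R - I) / 2"
  have \<eta>: "\<eta> > 0" using assms(2) by (simp add: \<eta>_def)
  obtain s where s: "s > 0" "s \<le> 1" "s * C - \<eta> * ln 2 < 0"
    using exists_small_tilt[OF \<eta> assms(1)] by blast
  show ?thesis
  proof (rule not_achievable_if_error_ge[of "exp (s * (s * C - \<eta> * ln 2))" "exp (- \<eta> * ln 2)"])
    show "exp (s * (s * C - \<eta> * ln 2)) < 1" using s by (simp add: mult_pos_neg)
    show "exp (- \<eta> * ln 2) < 1" using \<eta> by simp
  next
    fix n fS fR g
    define M where "M = nat \<lceil>2 powr (real n * R)\<rceil>"
    have "I + 2 * \<eta> = R" by (simp add: \<eta>_def field_simps)
    then have M: "real M \<ge> 2 powr (real n * (I + 2 * \<eta>))"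
      unfolding M_def by (simp add: real_nat_ceiling_ge)
    then have "M > 0" by (smt (verit) of_nat_0_less_iff powr_gt_zero)
    have "Y s ^ n \<le> exp (s * ln 2 * I + s\<^sup>2 * C) ^ n"
      using Y[OF s(1,2)] by (simp add: power_mono)
    then have "success K ps pd n M fS fR g
        \<le> real M * \<tau> powr (-s) * exp (real n * (s * ln 2 * I + s\<^sup>2 * C)) + \<tau>" if "\<tau> > 0" for \<tau>
      using success_le[OF s(1,2) that, of n M fS fR g]
      by (smt (verit) exp_of_nat_mult mult_left_mono mult_nonneg_nonneg of_nat_0_le_iff powr_ge_zero)
    then have "success K ps pd n M fS fR g / real M
          \<le> exp (s * (s * C - \<eta> * ln 2)) ^ n + exp (- \<eta> * ln 2) ^ n"
      using s by (intro tilted_bound_decay[where I = I] M) auto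
    then show "1 - exp (s * (s * C - \<eta> * ln 2)) ^ n - exp (- \<eta> * ln 2) ^ n
        \<le> error_prob K ps pd n (nat \<lceil>2 powr (real n * R)\<rceil>) fS fR g"
      using error_prob_eq_success[OF \<open>M > 0\<close>] by (simp add: M_def)
  qed simp_all
qed

section \<open>The cut between source and relays\<close>

definition uniform_out_prob :: "(nat \<Rightarrow> real) \<Rightarrow> nat \<Rightarrow> (nat \<Rightarrow> bool) \<Rightarrow> real" where
  "uniform_out_prob ps K v = (cond_prob ps K False v + cond_prob ps K True v) / 2"

definition tilted_sum :: "(nat \<Rightarrow> real) \<Rightarrow> nat \<Rightarrow> real \<Rightarrow> bool \<Rightarrow> real" where
  "tilted_sum ps K s u = (\<Sum>y\<in>out_set K.
     cond_prob ps K u y * (cond_prob ps K u y / uniform_out_prob ps K y) powr s)"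

definition cond_divergence :: "(nat \<Rightarrow> real) \<Rightarrow> nat \<Rightarrow> bool \<Rightarrow> real" where
  "cond_divergence ps K u = (\<Sum>y\<in>out_set K. if cond_prob ps K u y = 0 then 0
     else cond_prob ps K u y * log 2 (cond_prob ps K u y / uniform_out_prob ps K y))"

lemma sum_uniform_out_prob: "(\<Sum>y\<in>out_set K. uniform_out_prob ps K y) = 1"
  unfolding uniform_out_prob_def
  by (simp add: sum_divide_distrib[symmetric] sum.distrib sum_cond_prob)

lemma cond_prob_le_uniform_out_prob:
  "\<forall>i<K. 0 \<le> ps i \<and> ps i \<le> 1 \<Longrightarrow> cond_prob ps K u y \<le> 2 * uniform_out_prob ps K y"
  unfolding uniform_out_prob_def using cond_prob_nonneg[of K ps "\<not> u" y] by (cases u) auto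

lemma sum_cond_prob_True_eq_False:
  "(\<Sum>y\<in>out_set K. h (cond_prob ps K True y) (uniform_out_prob ps K y))
     = (\<Sum>y\<in>out_set K. h (cond_prob ps K False y) (uniform_out_prob ps K y))"
proof -
  define flip where "flip v = (\<lambda>i. i < K \<and> \<not> v i)" for v :: "nat \<Rightarrow> bool"
  have "cond_prob ps K True (flip y) = cond_prob ps K False y"
       "cond_prob ps K False (flip y) = cond_prob ps K True y" for y
    unfolding cond_prob_def flip_def by (auto intro!: prod.cong)
  then show ?thesis
    by (intro sum.reindex_bij_witness[of _ flip flip])
       (auto simp: flip_def out_set_def fun_eq_iff uniform_out_prob_def add.commute)
qed

lemma tilted_sum_eq_False: "tilted_sum ps K s u = tilted_sum ps K s False"
  unfolding tilted_sum_def
  by (cases u) (simp_all add: sum_cond_prob_True_eq_False[where h = "\<lambda>a b. a * (a / b) powr s"])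

lemma mutual_info_half: "mutual_info ps K (1/2) = cond_divergence ps K False"
proof -
  have "mutual_info ps K (1/2) = (cond_divergence ps K True + cond_divergence ps K False) / 2"
    unfolding mutual_info_def cond_divergence_def in_prob_def uniform_out_prob_def UNIV_bool
    by (simp add: sum_divide_distrib[symmetric] sum.distrib[symmetric] Let_def algebra_simps
        sum_distrib_left)
       (intro sum.cong refl, auto simp: add_divide_distrib)
  moreover have "cond_divergence ps K True = cond_divergence ps K False"
    unfolding cond_divergence_def by (rule sum_cond_prob_True_eq_False)
  ultimately show ?thesis by simp
qed

lemma tilted_sum_le_exp:
  assumes ps: "\<forall>i<K. 0 \<le> ps i \<and> ps i \<le> 1"
  obtains C where "0 \<le> C"
    "\<And>s. 0 \<le> s \<Longrightarrow> s \<le> 1 \<Longrightarrow>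
       tilted_sum ps K s False \<le> exp (s * ln 2 * mutual_info ps K (1/2) + s\<^sup>2 * C)"
proof
  let ?P = "cond_prob ps K False" and ?r = "\<lambda>y. cond_prob ps K False y / uniform_out_prob ps K y"
  show "0 \<le> (\<Sum>y\<in>out_set K. ?P y * (ln (?r y))\<^sup>2)"
    by (intro sum_nonneg mult_nonneg_nonneg cond_prob_nonneg ps) auto
  fix s :: real assume s: "0 \<le> s" "s \<le> 1"
  have "tilted_sum ps K s False
        \<le> (\<Sum>y\<in>out_set K. ?P y) + s * (\<Sum>y\<in>out_set K. ?P y * ln (?r y))
            + s\<^sup>2 * (\<Sum>y\<in>out_set K. ?P y * (ln (?r y))\<^sup>2)"
    unfolding tilted_sum_def
  proof (rule sum_mult_powr_le_quadratic)
    fix y assume "y \<in> out_set K" "?P y > 0"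
    have le: "?P y \<le> 2 * uniform_out_prob ps K y" by (rule cond_prob_le_uniform_out_prob[OF ps])
    then have Q: "uniform_out_prob ps K y > 0" using \<open>?P y > 0\<close> by linarith
    then have r: "?r y > 0" using \<open>?P y > 0\<close> by simp
    have "?r y \<le> 2" using le Q by (simp add: divide_le_eq mult.commute)
    then have "ln (?r y) < 1" using r ln_2_less_1 by (smt (verit) ln_le_cancel_iff)
    then have "s * ln (?r y) \<le> 1"
      using s by (smt (verit) mult_nonneg_nonpos mult_right_le_one_le)
    with r show "?r y > 0 \<and> s * ln (?r y) \<le> 1" by simp
  qed (use cond_prob_nonneg[OF ps] in auto)
  also have "(\<Sum>y\<in>out_set K. ?P y * ln (?r y)) = ln 2 * mutual_info ps K (1/2)"
    unfolding mutual_info_half cond_divergence_def sum_distrib_left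
    by (intro sum.cong refl) (auto simp: log_def)
  finally have "tilted_sum ps K s False
      \<le> 1 + (s * ln 2 * mutual_info ps K (1/2) + s\<^sup>2 * (\<Sum>y\<in>out_set K. ?P y * (ln (?r y))\<^sup>2))"
    by (simp add: sum_cond_prob mult.assoc)
  then show "tilted_sum ps K s False
      \<le> exp (s * ln 2 * mutual_info ps K (1/2) + s\<^sup>2 * (\<Sum>y\<in>out_set K. ?P y * (ln (?r y))\<^sup>2))"
    using exp_ge_add_one_self order_trans by blast
qed

definition uniform_word_prob :: "(nat \<Rightarrow> real) \<Rightarrow> nat \<Rightarrow> nat \<Rightarrow> (nat \<Rightarrow> nat \<Rightarrow> bool) \<Rightarrow> real" where
  "uniform_word_prob ps K n v = (\<Prod>t<n. uniform_out_prob ps K (\<lambda>i. v i t))"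

lemma uniform_word_prob_nonneg:
  "\<forall>i<K. 0 \<le> ps i \<and> ps i \<le> 1 \<Longrightarrow> 0 \<le> uniform_word_prob ps K n v"
  unfolding uniform_word_prob_def uniform_out_prob_def
  by (intro prod_nonneg) (auto intro!: add_nonneg_nonneg cond_prob_nonneg)

lemma sum_uniform_word_prob: "(\<Sum>v\<in>noise_set K n. uniform_word_prob ps K n v) = 1"
  unfolding uniform_word_prob_def
  using sum_noise_set_prod_columns[where h = "\<lambda>t. uniform_out_prob ps K" and K = K and n = n]
  by (simp add: sum_uniform_out_prob)

lemma relay_in_prob_le_uniform_word_prob:
  assumes "\<forall>i<K. 0 \<le> ps i \<and> ps i \<le> 1"
  shows "relay_in_prob K ps n fS w v \<le> 2 ^ n * uniform_word_prob ps K n v"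
proof -
  have "relay_in_prob K ps n fS w v \<le> (\<Prod>t<n. 2 * uniform_out_prob ps K (\<lambda>i. v i t))"
    unfolding relay_in_prob_def
    by (intro prod_mono conjI cond_prob_nonneg cond_prob_le_uniform_out_prob assms)
  then show ?thesis by (simp add: uniform_word_prob_def prod.distrib)
qed

lemma sum_relay_in_prob_tilted:
  "(\<Sum>v\<in>noise_set K n. relay_in_prob K ps n fS w v
       * (relay_in_prob K ps n fS w v / uniform_word_prob ps K n v) powr s)
     = tilted_sum ps K s False ^ n"
proof -
  have "(\<Sum>v\<in>noise_set K n. relay_in_prob K ps n fS w v
          * (relay_in_prob K ps n fS w v / uniform_word_prob ps K n v) powr s)
        = (\<Sum>v\<in>noise_set K n. \<Prod>t<n. (\<lambda>t y. cond_prob ps K (fS w t) y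
            * (cond_prob ps K (fS w t) y / uniform_out_prob ps K y) powr s) t (\<lambda>i. v i t))"
    unfolding relay_in_prob_def uniform_word_prob_def
    by (simp add: prod_dividef[symmetric] prod_powr_distrib flip: prod.distrib)
  also have "\<dots> = (\<Prod>t<n. tilted_sum ps K s (fS w t))"
    by (subst sum_noise_set_prod_columns) (simp add: tilted_sum_def)
  also have "\<dots> = (\<Prod>t<n. tilted_sum ps K s False)"
    by (intro prod.cong refl tilted_sum_eq_False)
  finally show ?thesis by simp
qed

lemma success_le_broadcast:
  assumes ps: "\<forall>i<K. 0 \<le> ps i \<and> ps i \<le> 1" and pd: "\<forall>i<K. 0 \<le> pd i \<and> pd i \<le> 1"
    and "\<tau> > 0" "s \<ge> 0"
  shows "success K ps pd n M fS fR g \<le> real M * \<tau> powr (-s) * tilted_sum ps K s False ^ n + \<tau>"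
proof -
  let ?N = "noise_set K n" and ?Q = "uniform_word_prob ps K n"
  let ?P = "relay_in_prob K ps n fS" and ?\<phi> = "decode_prob K pd n fR g"
  have "success K ps pd n M fS fR g = (\<Sum>w<M. \<Sum>v\<in>?N. ?P w v * ?\<phi> w v)"
    by (rule success_eq_sum_relay_in)
  also have "\<dots> \<le> (\<Sum>w<M. \<Sum>v\<in>?N. ?P w v * (?P w v / (\<tau> * ?Q v)) powr s + \<tau> * ?Q v * ?\<phi> w v)"
  proof (intro sum_mono mult_le_tilted_plus)
    show "0 < ?Q v" if "0 < ?P w v" for w v
      using that relay_in_prob_le_uniform_word_prob[OF ps, of n fS w v]
        uniform_word_prob_nonneg[OF ps, of n v] by (smt (verit) mult_eq_0_iff)
  qed (use relay_in_prob_nonneg[OF ps] uniform_word_prob_nonneg[OF ps] decode_prob_nonneg[OF pd]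
         decode_prob_le_1[OF pd] assms(3,4) in auto)
  also have "\<dots> = (\<Sum>w<M. \<tau> powr (-s) * (\<Sum>v\<in>?N. ?P w v * (?P w v / ?Q v) powr s))
                  + \<tau> * (\<Sum>v\<in>?N. ?Q v * (\<Sum>w<M. ?\<phi> w v))"
    by (simp add: sum.distrib sum_distrib_left sum.swap[of _ "{..<M}"] mult.assoc powr_divide
        powr_minus_divide powr_mult)
  also have "\<dots> \<le> (\<Sum>w<M. \<tau> powr (-s) * tilted_sum ps K s False ^ n) + \<tau> * (\<Sum>v\<in>?N. ?Q v * 1)"
    using assms(3) uniform_word_prob_nonneg[OF ps]
    by (intro add_mono mult_left_mono sum_mono sum_decode_prob_le_1 pd)
       (auto simp: sum_relay_in_prob_tilted)
  finally show ?thesis by (simp add: sum_uniform_word_prob)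
qed

lemma not_achievable_above_broadcast_cut:
  assumes ps: "\<forall>i<K. 0 \<le> ps i \<and> ps i \<le> 1" and pd: "\<forall>i<K. 0 \<le> pd i \<and> pd i \<le> 1"
    and "mutual_info ps K (1/2) < R"
  shows "\<not> achievable K ps pd R"
proof -
  obtain C where "0 \<le> C"
    and C: "\<And>s. 0 \<le> s \<Longrightarrow> s \<le> 1 \<Longrightarrow>
       tilted_sum ps K s False \<le> exp (s * ln 2 * mutual_info ps K (1/2) + s\<^sup>2 * C)"
    using tilted_sum_le_exp[OF ps] by blast
  have "0 \<le> tilted_sum ps K s False" for s
    unfolding tilted_sum_def by (intro sum_nonneg mult_nonneg_nonneg cond_prob_nonneg ps) auto
  with C show ?thesis
    by (intro not_achievable_if_success_le[OF \<open>0 \<le> C\<close> assms(3), where Y = "\<lambda>s. tilted_sum ps K s False"]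
        success_le_broadcast ps pd) auto
qed

section \<open>The cut between relays and destination\<close>

lemma binary_tilted_sum_le_exp:
  fixes p s :: real
  assumes p: "0 \<le> p" "p \<le> 1" and s: "0 \<le> s"
  shows "p * p powr s + (1 - p) * (1 - p) powr s
    \<le> exp (- s * ln 2 * binary_entropy p + s\<^sup>2 * (p * (ln p)\<^sup>2 + (1 - p) * (ln (1 - p))\<^sup>2))"
proof -
  let ?P = "\<lambda>b. if b then p else 1 - p"
  have "p * p powr s + (1 - p) * (1 - p) powr s = (\<Sum>b\<in>UNIV. ?P b * ?P b powr s)"
    by (simp add: UNIV_bool)
  also have "\<dots> \<le> (\<Sum>b\<in>UNIV. ?P b) + s * (\<Sum>b\<in>UNIV. ?P b * ln (?P b))
                    + s\<^sup>2 * (\<Sum>b\<in>UNIV. ?P b * (ln (?P b))\<^sup>2)"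
  proof (rule sum_mult_powr_le_quadratic)
    fix b :: bool assume "?P b > 0"
    moreover have "?P b \<le> 1" using p by auto
    ultimately show "?P b > 0 \<and> s * ln (?P b) \<le> 1"
      using s by (smt (verit) ln_le_zero_iff mult_nonneg_nonpos)
  qed (use p in auto)
  also have "(\<Sum>b\<in>UNIV. ?P b * ln (?P b)) = - ln 2 * binary_entropy p"
    using p by (cases "p = 0 \<or> p = 1") (auto simp: UNIV_bool binary_entropy_def log_def field_simps)
  finally have "p * p powr s + (1 - p) * (1 - p) powr s
      \<le> 1 + (- s * ln 2 * binary_entropy p + s\<^sup>2 * (p * (ln p)\<^sup>2 + (1 - p) * (ln (1 - p))\<^sup>2))"
    by (simp add: UNIV_bool algebra_simps)
  then show ?thesis using exp_ge_add_one_self order_trans by blast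
qed

text \<open>The tilted sum of the noise law of one use of the \<open>K\<close> links against the uniform law on
  \<open>2\<^sup>K\<close> words.\<close>

definition link_tilted_sum :: "(nat \<Rightarrow> real) \<Rightarrow> nat \<Rightarrow> real \<Rightarrow> real" where
  "link_tilted_sum pd K s
     = 2 powr (real K * s) * (\<Prod>i<K. pd i * pd i powr s + (1 - pd i) * (1 - pd i) powr s)"

lemma link_tilted_sum_nonneg:
  "\<forall>i<K. 0 \<le> pd i \<and> pd i \<le> 1 \<Longrightarrow> 0 \<le> link_tilted_sum pd K s"
  unfolding link_tilted_sum_def by (intro mult_nonneg_nonneg prod_nonneg) auto

lemma link_tilted_sum_le_exp:
  assumes pd: "\<forall>i<K. 0 \<le> pd i \<and> pd i \<le> 1"
  obtains C where "0 \<le> C"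
    "\<And>s. 0 \<le> s \<Longrightarrow>
       link_tilted_sum pd K s \<le> exp (s * ln 2 * (real K - (\<Sum>i<K. binary_entropy (pd i))) + s\<^sup>2 * C)"
proof
  define c where "c i = pd i * (ln (pd i))\<^sup>2 + (1 - pd i) * (ln (1 - pd i))\<^sup>2" for i
  show "0 \<le> sum c {..<K}"
    unfolding c_def using pd by (intro sum_nonneg add_nonneg_nonneg mult_nonneg_nonneg) auto
  fix s :: real assume "0 \<le> s"
  have "(\<Prod>i<K. pd i * pd i powr s + (1 - pd i) * (1 - pd i) powr s)
        \<le> (\<Prod>i<K. exp (- s * ln 2 * binary_entropy (pd i) + s\<^sup>2 * c i))"
    unfolding c_def using pd \<open>0 \<le> s\<close>
    by (intro prod_mono conjI add_nonneg_nonneg mult_nonneg_nonneg binary_tilted_sum_le_exp) auto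
  also have "\<dots> = exp (- s * ln 2 * (\<Sum>i<K. binary_entropy (pd i)) + s\<^sup>2 * sum c {..<K})"
    by (subst exp_sum[symmetric])
       (simp_all add: sum.distrib sum_distrib_left mult.assoc sum_negf sum_subtractf)
  finally have "link_tilted_sum pd K s
      \<le> exp (s * ln 2 * real K) * exp (- s * ln 2 * (\<Sum>i<K. binary_entropy (pd i)) + s\<^sup>2 * sum c {..<K})"
    unfolding link_tilted_sum_def by (simp add: powr_def mult_ac)
  then show "link_tilted_sum pd K s
      \<le> exp (s * ln 2 * (real K - (\<Sum>i<K. binary_entropy (pd i))) + s\<^sup>2 * sum c {..<K})"
    by (simp add: algebra_simps flip: exp_add)
qed

lemma decode_prob_le_uniform:
  assumes pd: "\<forall>i<K. 0 \<le> pd i \<and> pd i \<le> 1" and "\<tau> > 0" "s \<ge> 0"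
  shows "decode_prob K pd n fR g w v \<le> \<tau> powr (-s) * link_tilted_sum pd K s ^ n
     + \<tau> / 2 ^ (K * n) * (\<Sum>y\<in>noise_set K n. if g y = w then 1 else 0)"
proof -
  let ?N = "noise_set K n" and ?P = "noise_prob pd K n" and ?c = "\<tau> / 2 ^ (K * n)"
  let ?ind = "\<lambda>y. if g y = w then 1 else (0::real)"
  have "?P e * ?ind y \<le> ?P e * (?P e / ?c) powr s + ?c * ?ind y" for e y
    using mult_le_tilted_plus[of "?P e" 1 "?ind y" ?c s] noise_prob_nonneg[OF pd] assms(2,3) by auto
  then have "decode_prob K pd n fR g w v
      \<le> (\<Sum>e\<in>?N. ?P e * (?P e / ?c) powr s) + ?c * (\<Sum>e\<in>?N. ?ind (link_out K n fR v e))"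
    unfolding decode_prob_def by (simp add: sum_distrib_left sum_mono flip: sum.distrib)
  also have "(\<Sum>e\<in>?N. ?P e * (?P e / ?c) powr s) = ?c powr (-s) * (\<Sum>e\<in>?N. ?P e * ?P e powr s)"
    using noise_prob_nonneg[OF pd]
    by (simp add: sum_distrib_left powr_divide powr_minus_divide powr_mult mult_ac)
  also have "(\<Sum>e\<in>?N. ?P e * ?P e powr s) = (\<Sum>e\<in>?N. \<Prod>i<K. \<Prod>t<n.
     (\<lambda>i t b. (if b then pd i else 1 - pd i) * (if b then pd i else 1 - pd i) powr s) i t (e i t))"
    unfolding noise_prob_def by (simp add: prod_powr_distrib prod.distrib)
  also have "\<dots> = (\<Prod>i<K. pd i * pd i powr s + (1 - pd i) * (1 - pd i) powr s) ^ n"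
    by (subst sum_noise_set_prod) (simp add: prod_power_distrib)
  also have "?c powr (-s) * \<dots> = \<tau> powr (-s) * link_tilted_sum pd K s ^ n"
    using \<open>\<tau> > 0\<close> unfolding link_tilted_sum_def
    by (simp add: powr_divide powr_minus_divide power_mult_distrib powr_realpow[symmetric]
        powr_powr powr_power mult_ac)
  also have "(\<Sum>e\<in>?N. ?ind (link_out K n fR v e)) = (\<Sum>y\<in>?N. ?ind y)"
    unfolding link_out_def
    by (rule sum.reindex_bij_witness[of _ "\<lambda>y i t. if i < K \<and> t < n then fR i t (v i) \<noteq> y i t else False"
          "\<lambda>e i t. if i < K \<and> t < n then fR i t (v i) \<noteq> e i t else False"])
       (auto simp: noise_set_def fun_eq_iff)
  finally show ?thesis .
qed

lemma success_le_multiaccess: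
  assumes ps: "\<forall>i<K. 0 \<le> ps i \<and> ps i \<le> 1" and pd: "\<forall>i<K. 0 \<le> pd i \<and> pd i \<le> 1"
    and "\<tau> > 0" "s \<ge> 0"
  shows "success K ps pd n M fS fR g \<le> real M * \<tau> powr (-s) * link_tilted_sum pd K s ^ n + \<tau>"
proof -
  let ?N = "noise_set K n" and ?A = "\<tau> powr (-s) * link_tilted_sum pd K s ^ n"
  let ?D = "\<lambda>w. \<Sum>y\<in>?N. if g y = w then 1 else (0::real)"
  have "(\<Sum>w<M. ?D w) = (\<Sum>y\<in>?N. \<Sum>w<M. if g y = w then 1 else (0::real))" by (rule sum.swap)
  also have "\<dots> \<le> (\<Sum>y\<in>?N. 1)" by (intro sum_mono) (auto simp: sum.If_cases)
  finally have D: "(\<Sum>w<M. ?D w) \<le> 2 ^ (K * n)" by (simp add: card_noise_set)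
  have "success K ps pd n M fS fR g
        = (\<Sum>w<M. \<Sum>v\<in>?N. relay_in_prob K ps n fS w v * decode_prob K pd n fR g w v)"
    by (rule success_eq_sum_relay_in)
  also have "\<dots> \<le> (\<Sum>w<M. \<Sum>v\<in>?N. relay_in_prob K ps n fS w v * (?A + \<tau> / 2 ^ (K * n) * ?D w))"
    by (intro sum_mono mult_left_mono relay_in_prob_nonneg decode_prob_le_uniform ps pd assms(3,4))
  also have "\<dots> = real M * ?A + \<tau> / 2 ^ (K * n) * (\<Sum>w<M. ?D w)"
    by (simp add: sum.distrib sum_relay_in_prob
        flip: sum_distrib_left sum_distrib_right sum_divide_distrib)
  also have "\<dots> \<le> real M * ?A + \<tau>"
    using D assms(3) by (simp add: mult_left_mono divide_le_eq)
  finally show ?thesis by (simp add: mult.assoc)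
qed

lemma not_achievable_above_multiaccess_cut:
  assumes ps: "\<forall>i<K. 0 \<le> ps i \<and> ps i \<le> 1" and pd: "\<forall>i<K. 0 \<le> pd i \<and> pd i \<le> 1"
    and "real K - (\<Sum>i<K. binary_entropy (pd i)) < R"
  shows "\<not> achievable K ps pd R"
proof -
  obtain C where "0 \<le> C"
    and C: "\<And>s. 0 \<le> s \<Longrightarrow>
       link_tilted_sum pd K s \<le> exp (s * ln 2 * (real K - (\<Sum>i<K. binary_entropy (pd i))) + s\<^sup>2 * C)"
    using link_tilted_sum_le_exp[OF pd] by blast
  with link_tilted_sum_nonneg[OF pd] show ?thesis
    by (intro not_achievable_if_success_le[OF \<open>0 \<le> C\<close> assms(3), where Y = "link_tilted_sum pd K"]
        success_le_multiaccess ps pd) auto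
qed

lemma mult_log_div_le:
  fixes a c p :: real
  assumes "0 < a" "a \<le> p" "0 < c"
  shows "a * log 2 (c / p) \<le> c / ln 2"
proof -
  have "log 2 (c / p) \<le> (c / p) / ln 2"
    unfolding log_def using assms by (intro divide_right_mono less_imp_le[OF ln_less_self]) auto
  then have "a * log 2 (c / p) \<le> a * ((c / p) / ln 2)"
    using assms by (intro mult_left_mono) auto
  also have "\<dots> = (a / p) * (c / ln 2)" by simp
  also have "\<dots> \<le> 1 * (c / ln 2)"
    using assms by (intro mult_right_mono) auto
  finally show ?thesis by simp
qed

lemma bdd_above_mutual_info:
  assumes ps: "\<forall>i<K. 0 \<le> ps i \<and> ps i \<le> 1"
  shows "bdd_above (mutual_info ps K ` {0..1})"
proof (rule bdd_aboveI2)
  fix q :: real assume q: "q \<in> {0..1}"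
  have in_prob: "0 \<le> in_prob q u" for u using q by (auto simp: in_prob_def)
  have term_le: "(let a = in_prob q u * cond_prob ps K u v;
             pv = (\<Sum>u'\<in>(UNIV :: bool set). in_prob q u' * cond_prob ps K u' v)
         in if a = 0 then 0 else a * log 2 (cond_prob ps K u v / pv)) \<le> cond_prob ps K u v / ln 2"
    for u v
  proof -
    define a where "a = in_prob q u * cond_prob ps K u v"
    define pv where "pv = (\<Sum>u'\<in>(UNIV :: bool set). in_prob q u' * cond_prob ps K u' v)"
    have c: "0 \<le> cond_prob ps K u v" by (rule cond_prob_nonneg[OF ps])
    have a: "0 \<le> a" unfolding a_def using in_prob c by simp
    have a_le: "a \<le> pv" unfolding a_def pv_def
      by (rule member_le_sum) (auto intro!: mult_nonneg_nonneg in_prob cond_prob_nonneg ps)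
    show ?thesis
    proof (cases "a = 0")
      case True
      then show ?thesis using c by (simp add: a_def[symmetric] pv_def[symmetric] Let_def)
    next
      case False
      then have "a > 0" using a by auto
      then have "cond_prob ps K u v > 0" using c in_prob[of u] unfolding a_def
        by (metis less_eq_real_def mult_zero_right)
      with \<open>a > 0\<close> a_le have "a * log 2 (cond_prob ps K u v / pv) \<le> cond_prob ps K u v / ln 2"
        by (rule mult_log_div_le)
      then show ?thesis using False by (simp add: a_def[symmetric] pv_def[symmetric] Let_def)
    qed
  qed
  have "mutual_info ps K q \<le> (\<Sum>u\<in>(UNIV::bool set). \<Sum>v\<in>out_set K. cond_prob ps K u v / ln 2)"
    unfolding mutual_info_def by (intro sum_mono term_le)
  also have "\<dots> = 2 / ln 2" by (simp add: sum_divide_distrib[symmetric] sum_cond_prob UNIV_bool)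
  finally show "mutual_info ps K q \<le> 2 / ln 2" .
qed

lemma achievable_zero: "achievable K ps pd 0"
  unfolding achievable_def
  by (auto intro!: exI[of _ 0] exI[of _ "\<lambda>i t v. False"] exI[of _ "\<lambda>_. 0"]
      simp: causal_relays_def error_prob_def)

theorem theorem1:
  fixes K :: nat and ps pd :: "nat \<Rightarrow> real"
  assumes "K \<ge> 1"
    and "\<forall>i<K. 0 \<le> ps i \<and> ps i \<le> 1/2"
    and "\<forall>i<K. 0 \<le> pd i \<and> pd i \<le> 1/2"
  shows "capacity K ps pd \<le> R_ub K ps pd"
proof -
  have ps: "\<forall>i<K. 0 \<le> ps i \<and> ps i \<le> 1" and pd: "\<forall>i<K. 0 \<le> pd i \<and> pd i \<le> 1"
    using assms(2,3) by auto
  have "mutual_info ps K (1/2) \<le> (SUP q\<in>{0..1}. mutual_info ps K q)"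
    by (rule cSUP_upper[OF _ bdd_above_mutual_info[OF ps]]) auto
  moreover have "R \<le> mutual_info ps K (1/2)" and "R \<le> real K - (\<Sum>i<K. binary_entropy (pd i))"
    if "achievable K ps pd R" for R
    using that not_achievable_above_broadcast_cut[OF ps pd]
      not_achievable_above_multiaccess_cut[OF ps pd] by force+
  ultimately show ?thesis
    unfolding capacity_def R_ub_def using achievable_zero
    by (intro cSup_least) fastforce+
qed

end
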